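(* For $\gamma>1$, consider the Tsallis scoring rule with parameter $\gamma$ on the forecast domain $\mathcal{D}=\Delta^n$, i.e. the scoring rule given by $G(\mathbf{p})=\sum_{j=1}^n p_j^{\gamma}$. If $1<\gamma\le2$, this scoring rule has convex exposure. If $\gamma>2$ and $n>2$, it does not have convex exposure.
   Context: $\Delta^n$ is the standard simplex in $\mathbb{R}^n$. The scoring rule given by a differentiable strictly convex $G$ is $s(\mathbf{p};j)=G(\mathbf{p})+\langle\nabla G(\mathbf{p}),\delta_j-\mathbf{p}\rangle$ ($\delta_j$ the $j$-th standard basis vector). Its exposure function is $\mathbf{g}=\nabla G$, with values understood modulo translation by the all-ones vector (equivalently projected onto $\{\mathbf{x}:\sum_i x_i=0\}$). Convex exposure means the range of $\mathbf{g}$ is a convex set. *)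

theory Defs
  imports "HOL-Analysis.Analysis"
begin

text \<open>Standard simplex in R^n; the index type 'n has CARD('n) = n elements.\<close>
definition prob_simplex :: "(real^'n) set" where
  "prob_simplex = {p. (\<forall>i. 0 \<le> p $ i) \<and> (\<Sum>i\<in>UNIV. p $ i) = 1}"

definition tsallis_G :: "real \<Rightarrow> real^'n \<Rightarrow> real" where
  "tsallis_G \<gamma> p = (\<Sum>j\<in>UNIV. (p $ j) powr \<gamma>)"

text \<open>Its exposure function g = grad G, i.e. g(p)_j = gamma * p_j^(gamma-1).\<close>
definition tsallis_exposure :: "real \<Rightarrow> real^'n \<Rightarrow> real^'n" where
  "tsallis_exposure \<gamma> p = (\<chi> j. \<gamma> * (p $ j) powr (\<gamma> - 1))"

text \<open>Projection onto the hyperplane {x. sum_i x_i = 0} (quotient by the all-ones vector).\<close>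
definition proj_sum_zero :: "real^'n \<Rightarrow> real^'n" where
  "proj_sum_zero x = x - ((\<Sum>i\<in>UNIV. x $ i) / real CARD('n)) *\<^sub>R (\<chi> i. 1)"

definition has_convex_exposure :: "(real^'n \<Rightarrow> real^'n) \<Rightarrow> (real^'n) set \<Rightarrow> bool" where
  "has_convex_exposure g D \<longleftrightarrow> convex (proj_sum_zero ` g ` D)"

end

theory Submission
  imports Defs
begin

(*
  Modulo the all-ones direction, a vector z >= 0 is the exposure of a point of the simplex as
  soon as sum_j (z_j / \<gamma>)^(1/(\<gamma>-1)) <= 1: by the intermediate value theorem some shift c >= 0
  makes the same sum for z + c equal to 1, and r_j = ((z_j + c) / \<gamma>)^(1/(\<gamma>-1)) is that point.
  For \<gamma> <= 2 the exponent 1/(\<gamma>-1) is at least 1, and convexity of t^(1/(\<gamma>-1)) shows that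
  every convex combination of two exposures satisfies the bound.
  For \<gamma> > 2 the midpoint of the exposures \<gamma> e_i and \<gamma> e_j of two vertices is not an exposure:
  a third coordinate k forces the shift to be nonnegative, so a preimage r would satisfy
  r_i^(\<gamma>-1) >= 1/2 and r_j^(\<gamma>-1) >= 1/2, hence r_i + r_j > 1.
*)

lemma convex_on_powr_nonneg:
  fixes p :: real
  assumes "p \<ge> 1"
  shows "convex_on {0..} (\<lambda>x. x powr p)"
proof
  fix t x y :: real
  assume t: "0 < t" "t < 1" and xy: "x \<in> {0..}" "y \<in> {0..}" "x < y"
  show "((1 - t) *\<^sub>R x + t *\<^sub>R y) powr p \<le> (1 - t) * x powr p + t * y powr p"
  proof (cases "x = 0")
    case True
    have "t powr p \<le> t powr 1"
      using t assms by (intro powr_mono') auto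
    then have "t powr p * y powr p \<le> t * y powr p"
      using t by (simp add: mult_right_mono)
    then show ?thesis
      using True t xy by (simp add: powr_mult)
  next
    case False
    then show ?thesis
      using convex_onD[OF powr_convex[OF assms], of t x y] t xy by simp
  qed
qed simp

lemma le_powr_imp_less:
  fixes x a t :: real
  assumes "0 \<le> x" "1 < a" "0 < t" "t < 1" "t \<le> x powr a"
  shows "t < x"
proof (rule ccontr)
  assume "\<not> t < x"
  then have "x powr a \<le> t powr a"
    using assms by (intro powr_mono2) auto
  also have "\<dots> < t powr 1"
    using assms by (intro powr_less_mono') auto
  finally show False
    using assms by simp
qed

lemma proj_sum_zero_add_ones: "proj_sum_zero (x + c *\<^sub>R (\<chi> i. 1)) = proj_sum_zero (x :: real^'n)"
  unfolding proj_sum_zero_def by (simp add: vec_eq_iff sum.distrib field_simps)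

lemma linear_proj_sum_zero: "linear (proj_sum_zero :: real^'n \<Rightarrow> real^'n)"
  by (rule linearI) (simp_all add: proj_sum_zero_def vec_eq_iff sum.distrib
      sum_distrib_left[symmetric] field_simps)

lemma proj_sum_zero_eq_iff:
  "proj_sum_zero x = proj_sum_zero y \<longleftrightarrow> (\<exists>c. x = y + c *\<^sub>R (\<chi> i. 1))" for x y :: "real^'n"
proof
  assume "proj_sum_zero x = proj_sum_zero y"
  then have "x = y + ((\<Sum>i\<in>UNIV. x $ i) / CARD('n) - (\<Sum>i\<in>UNIV. y $ i) / CARD('n)) *\<^sub>R (\<chi> i. 1)"
    by (simp add: proj_sum_zero_def vec_eq_iff algebra_simps)
  then show "\<exists>c. x = y + c *\<^sub>R (\<chi> i. 1)" ..
qed (auto simp: proj_sum_zero_add_ones)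

lemma convex_proj_sum_zero_image_iff:
  fixes S :: "(real^'n) set"
  shows "convex (proj_sum_zero ` S) \<longleftrightarrow>
    (\<forall>x\<in>S. \<forall>y\<in>S. \<forall>u. 0 \<le> u \<and> u \<le> 1 \<longrightarrow>
      (\<exists>c. (1 - u) *\<^sub>R x + u *\<^sub>R y + c *\<^sub>R (\<chi> i. 1) \<in> S))"
proof -
  have comb: "(1 - u) *\<^sub>R proj_sum_zero x + u *\<^sub>R proj_sum_zero y
      = proj_sum_zero ((1 - u) *\<^sub>R x + u *\<^sub>R y)" for x y :: "real^'n" and u
    by (simp add: linear_add[OF linear_proj_sum_zero] linear_scale[OF linear_proj_sum_zero])
  have proj_in_image: "proj_sum_zero w \<in> proj_sum_zero ` S \<longleftrightarrow> (\<exists>c. w + c *\<^sub>R (\<chi> i. 1) \<in> S)"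
    for w :: "real^'n"
  proof
    assume "proj_sum_zero w \<in> proj_sum_zero ` S"
    then obtain s c where "s \<in> S" "s = w + c *\<^sub>R (\<chi> i. 1)"
      by (metis imageE proj_sum_zero_eq_iff)
    then show "\<exists>c. w + c *\<^sub>R (\<chi> i. 1) \<in> S" by blast
  next
    assume "\<exists>c. w + c *\<^sub>R (\<chi> i. 1) \<in> S"
    then show "proj_sum_zero w \<in> proj_sum_zero ` S"
      by (metis proj_sum_zero_add_ones image_eqI)
  qed
  show ?thesis
    unfolding convex_alt by (simp add: comb proj_in_image)
qed

lemma tsallis_exposure_nth [simp]: "tsallis_exposure \<gamma> p $ j = \<gamma> * p $ j powr (\<gamma> - 1)"
  by (simp add: tsallis_exposure_def)

lemma tsallis_exposure_axis: "tsallis_exposure \<gamma> (axis k 1) = \<gamma> *\<^sub>R axis k 1"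
  by (simp add: vec_eq_iff axis_def)

lemma axis_in_prob_simplex: "axis k 1 \<in> prob_simplex"
  by (simp add: prob_simplex_def axis_def)

lemma shift_in_tsallis_exposure_image:
  fixes z :: "real^'n"
  assumes "\<gamma> > 1" and z_nonneg: "\<And>j. 0 \<le> z $ j"
    and z_small: "(\<Sum>j\<in>UNIV. (z $ j / \<gamma>) powr (1 / (\<gamma> - 1))) \<le> 1"
  shows "\<exists>c. z + c *\<^sub>R (\<chi> i. 1) \<in> tsallis_exposure \<gamma> ` prob_simplex"
proof -
  define b where "b = 1 / (\<gamma> - 1)"
  have "\<gamma> > 0" "b > 0" "b * (\<gamma> - 1) = 1"
    using assms by (simp_all add: b_def)
  define \<Phi> where "\<Phi> c = (\<Sum>j\<in>UNIV. ((z $ j + c) / \<gamma>) powr b)" for c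
  have "continuous_on {0..\<gamma>} \<Phi>"
    unfolding \<Phi>_def using \<open>\<gamma> > 0\<close> \<open>b > 0\<close> z_nonneg
    by (intro continuous_on_sum continuous_on_powr' continuous_intros) auto
  moreover have "\<Phi> 0 \<le> 1"
    using z_small by (simp add: \<Phi>_def b_def)
  moreover have "1 \<le> \<Phi> \<gamma>"
  proof -
    fix j :: 'n
    have "1 \<le> ((z $ j + \<gamma>) / \<gamma>) powr b"
      using \<open>\<gamma> > 0\<close> \<open>b > 0\<close> z_nonneg[of j] by (intro ge_one_powr_ge_zero) auto
    also have "\<dots> \<le> \<Phi> \<gamma>"
      unfolding \<Phi>_def using \<open>\<gamma> > 0\<close> z_nonneg by (intro member_le_sum) auto
    finally show ?thesis .
  qed
  ultimately obtain c where c: "0 \<le> c" "\<Phi> c = 1"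
    using IVT'[of \<Phi> 0 1 \<gamma>] \<open>\<gamma> > 0\<close> by auto
  define r where "r = (\<chi> j. ((z $ j + c) / \<gamma>) powr b)"
  have "r \<in> prob_simplex"
    using c by (simp add: prob_simplex_def r_def \<Phi>_def)
  moreover have "tsallis_exposure \<gamma> r = z + c *\<^sub>R (\<chi> i. 1)"
    using \<open>\<gamma> > 0\<close> \<open>b * (\<gamma> - 1) = 1\<close> c(1) z_nonneg
    by (simp add: vec_eq_iff r_def powr_powr add_nonneg_nonneg)
  ultimately show ?thesis
    by (metis image_eqI)
qed

lemma convex_combination_shift_in_tsallis_exposure_image:
  fixes p q :: "real^'n"
  assumes "1 < \<gamma>" "\<gamma> \<le> 2" and p: "p \<in> prob_simplex" and q: "q \<in> prob_simplex"
    and "0 \<le> u" "u \<le> 1"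
  shows "\<exists>c. (1 - u) *\<^sub>R tsallis_exposure \<gamma> p + u *\<^sub>R tsallis_exposure \<gamma> q + c *\<^sub>R (\<chi> i. 1)
           \<in> tsallis_exposure \<gamma> ` prob_simplex"
proof -
  define a where "a = \<gamma> - 1"
  have "a \<noteq> 0" "1 \<le> 1 / a"
    using assms by (simp_all add: a_def)
  define z where "z = (1 - u) *\<^sub>R tsallis_exposure \<gamma> p + u *\<^sub>R tsallis_exposure \<gamma> q"
  have z_div: "z $ j / \<gamma> = (1 - u) * p $ j powr a + u * q $ j powr a" for j
    using assms by (simp add: z_def a_def field_simps)
  have "(z $ j / \<gamma>) powr (1 / a) \<le> (1 - u) * p $ j + u * q $ j" for j
  proof -
    have "(z $ j / \<gamma>) powr (1 / a)
        \<le> (1 - u) * (p $ j powr a) powr (1 / a) + u * (q $ j powr a) powr (1 / a)"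
      unfolding z_div using convex_onD[OF convex_on_powr_nonneg[OF \<open>1 \<le> 1 / a\<close>]] assms
      by simp
    also have "\<dots> = (1 - u) * p $ j + u * q $ j"
      using p q \<open>a \<noteq> 0\<close> by (simp add: prob_simplex_def powr_powr)
    finally show ?thesis .
  qed
  then have "(\<Sum>j\<in>UNIV. (z $ j / \<gamma>) powr (1 / a)) \<le> (\<Sum>j\<in>UNIV. (1 - u) * p $ j + u * q $ j)"
    by (rule sum_mono)
  also have "\<dots> = 1"
    using p q by (simp add: prob_simplex_def sum.distrib sum_distrib_left[symmetric])
  finally have "(\<Sum>j\<in>UNIV. (z $ j / \<gamma>) powr (1 / (\<gamma> - 1))) \<le> 1"
    by (simp add: a_def)
  moreover have "0 \<le> z $ j" for j
    using assms by (simp add: z_def)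
  ultimately have "\<exists>c. z + c *\<^sub>R (\<chi> i. 1) \<in> tsallis_exposure \<gamma> ` prob_simplex"
    by (intro shift_in_tsallis_exposure_image[OF \<open>1 < \<gamma>\<close>])
  then show ?thesis
    unfolding z_def .
qed

lemma vertex_midpoint_shift_notin_tsallis_exposure_image:
  fixes i j k :: "'n::finite"
  assumes "\<gamma> > 2" "i \<noteq> j" "k \<noteq> i" "k \<noteq> j"
  shows "(1/2) *\<^sub>R tsallis_exposure \<gamma> (axis i 1) + (1/2) *\<^sub>R tsallis_exposure \<gamma> (axis j 1)
           + c *\<^sub>R (\<chi> i. 1) \<notin> tsallis_exposure \<gamma> ` prob_simplex"
proof
  assume "(1/2) *\<^sub>R tsallis_exposure \<gamma> (axis i 1) + (1/2) *\<^sub>R tsallis_exposure \<gamma> (axis j 1)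
           + c *\<^sub>R (\<chi> i. 1) \<in> tsallis_exposure \<gamma> ` prob_simplex"
  then obtain r where r: "r \<in> prob_simplex" and exposure_r:
      "tsallis_exposure \<gamma> r = (\<gamma> / 2) *\<^sub>R (axis i 1 + axis j 1) + c *\<^sub>R (\<chi> i. 1)"
    by (auto simp: tsallis_exposure_axis scaleR_add_right)
  have r_nonneg: "\<And>l. 0 \<le> r $ l" and r_sum: "(\<Sum>l\<in>UNIV. r $ l) = 1"
    using r by (auto simp: prob_simplex_def)
  have "0 \<le> \<gamma> * r $ k powr (\<gamma> - 1)"
    using assms by simp
  also have "\<dots> = c"
    using arg_cong[OF exposure_r, of "\<lambda>x. x $ k"] assms by (simp add: axis_def)
  finally have "0 \<le> c" .
  have half_lt: "1/2 < r $ l" if "l = i \<or> l = j" for l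
  proof (rule le_powr_imp_less)
    have "\<gamma> * r $ l powr (\<gamma> - 1) = \<gamma> / 2 + c"
      using arg_cong[OF exposure_r, of "\<lambda>x. x $ l"] that assms by (auto simp: axis_def)
    then have "\<gamma> * (1/2) \<le> \<gamma> * r $ l powr (\<gamma> - 1)"
      using \<open>0 \<le> c\<close> by simp
    then show "1/2 \<le> r $ l powr (\<gamma> - 1)"
      using assms by (subst (asm) mult_le_cancel_left_pos) auto
  qed (use assms r_nonneg in auto)
  have "r $ i + r $ j = (\<Sum>l\<in>{i, j}. r $ l)"
    using assms by simp
  also have "\<dots> \<le> 1"
    unfolding r_sum[symmetric] using r_nonneg by (intro sum_mono2) auto
  finally show False
    using half_lt[of i] half_lt[of j] by simp
qed

lemma not_convex_proj_sum_zero_tsallis_exposure_image: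
  fixes i j k :: "'n::finite"
  assumes "\<gamma> > 2" "i \<noteq> j" "k \<noteq> i" "k \<noteq> j"
  shows "\<not> convex (proj_sum_zero ` tsallis_exposure \<gamma> ` (prob_simplex :: (real^'n) set))"
proof
  let ?S = "tsallis_exposure \<gamma> ` (prob_simplex :: (real^'n) set)"
  let ?e = "\<lambda>l. tsallis_exposure \<gamma> (axis l 1 :: real^'n)"
  have e_in: "?e i \<in> ?S" "?e j \<in> ?S"
    using axis_in_prob_simplex by blast+
  assume "convex (proj_sum_zero ` ?S)"
  then have "\<forall>x\<in>?S. \<forall>y\<in>?S. \<forall>u. 0 \<le> u \<and> u \<le> 1 \<longrightarrow>
      (\<exists>c. (1 - u) *\<^sub>R x + u *\<^sub>R y + c *\<^sub>R (\<chi> i. 1) \<in> ?S)"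
    unfolding convex_proj_sum_zero_image_iff .
  from this[rule_format, OF e_in, of "1/2"]
  obtain c where "(1/2) *\<^sub>R ?e i + (1/2) *\<^sub>R ?e j + c *\<^sub>R (\<chi> i. 1) \<in> ?S"
    by auto
  then show False
    using vertex_midpoint_shift_notin_tsallis_exposure_image[OF assms] by blast
qed

theorem propositionF8:
  fixes \<gamma> :: real
  assumes "\<gamma> > 1"
  shows "(\<gamma> \<le> 2 \<longrightarrow>
            has_convex_exposure (tsallis_exposure \<gamma>) (prob_simplex :: (real^'n) set))
       \<and> (\<gamma> > 2 \<and> CARD('n) > 2 \<longrightarrow>
            \<not> has_convex_exposure (tsallis_exposure \<gamma>) (prob_simplex :: (real^'n) set))"
proof (intro conjI impI)
  assume "\<gamma> \<le> 2"
  then show "has_convex_exposure (tsallis_exposure \<gamma>) (prob_simplex :: (real^'n) set)"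
    unfolding has_convex_exposure_def convex_proj_sum_zero_image_iff
    using convex_combination_shift_in_tsallis_exposure_image[OF assms] by blast
next
  assume "\<gamma> > 2 \<and> CARD('n) > 2"
  moreover obtain i j k :: 'n where "i \<noteq> j" "k \<noteq> i" "k \<noteq> j"
    using ex_card[of 3 "UNIV :: 'n set"] calculation by (auto simp: card_3_iff)
  ultimately show "\<not> has_convex_exposure (tsallis_exposure \<gamma>) (prob_simplex :: (real^'n) set)"
    unfolding has_convex_exposure_def
    using not_convex_proj_sum_zero_tsallis_exposure_image by blast
qed

end
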